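(* Let $m\ge0$ be an integer. Every $f\in LC(O,K)$ can be expanded uniquely as $$f(x)=\sum_{n=0}^\infty\beta_n^{(m)}\,\mathcal{D}_n(x)^{q^m}\qquad(x\in O),$$ with $\beta_n^{(m)}\in K$, $\beta_n^{(m)}\to0$, where the coefficients are given by $$\beta_n^{(m)}=\big((\Delta-[m]I)^nf\big)(1)=\sum_{i=0}^n\sum_{j=i}^n(-1)^{n-i}\binom{n}{j}[m]^{n-j}f(T^i)\,\mathcal{D}_i(T^j).$$
   Context: Let $q$ be a prime power, $K=\mathbf{F}_q((T))$, $O=\mathbf{F}_q[[T]]$, with $T$-adic absolute value, and $LC(O,K)$ the $K$-Banach space (sup-norm) of continuous $\mathbf{F}_q$-linear functions $O\to K$. Put $[m]=T^{q^m}-T$ (so $[0]=0$). Hasse derivatives: $\mathcal{D}_n(\sum_ia_iT^i)=\sum_i\binom{i}{n}a_iT^{i-n}$ (binomials in $\mathbf{F}_q$). The Carlitz difference operator $\Delta$ on $LC(O,K)$ is $(\Delta f)(x)=f(Tx)-Tf(x)$, and $I$ is the identity operator; binomial coefficients $\binom{n}{j}$ are read in $\mathbf{F}_q$. *)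

theory Defs
  imports "HOL-Computational_Algebra.Formal_Laurent_Series" "HOL-Library.Cardinality"
begin

text \<open>O = F_q[[T]] is modelled as the type 'a fps, K = F_q((T)) as 'a fls, where
 'a is a finite field (so q = CARD('a) is a prime power). Both carry the library's
 T-adic metric (base 2 instead of q, which gives the same topology and the same notion
 of convergence).\<close>

definition Fq_linear :: "('a::field fps \<Rightarrow> 'a fls) \<Rightarrow> bool" where
  "Fq_linear f \<longleftrightarrow> (\<forall>x y. f (x + y) = f x + f y) \<and>
                    (\<forall>c x. f (fps_const c * x) = fls_const c * f x)"

definition LC :: "('a::{field,finite} fps \<Rightarrow> 'a fls) set" where
  "LC = {f. Fq_linear f \<and> continuous_on UNIV f}"

definition hasse :: "nat \<Rightarrow> 'a::field fps \<Rightarrow> 'a fps" where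
  "hasse n x = Abs_fps (\<lambda>k. of_nat ((k + n) choose n) * (x $ (k + n)))"

definition bracket :: "nat \<Rightarrow> 'a::{field,finite} fls" where
  "bracket m = fls_X ^ (CARD('a) ^ m) - fls_X"

definition Carlitz_Delta :: "('a::field fps \<Rightarrow> 'a fls) \<Rightarrow> ('a fps \<Rightarrow> 'a fls)" where
  "Carlitz_Delta f = (\<lambda>x. f (fps_X * x) - fls_X * f x)"

definition Delta_minus :: "nat \<Rightarrow> ('a::{field,finite} fps \<Rightarrow> 'a fls) \<Rightarrow> ('a fps \<Rightarrow> 'a fls)" where
  "Delta_minus m f = (\<lambda>x. Carlitz_Delta f x - bracket m * f x)"

end

theory Submission
  imports Defs "HOL-Algebra.FiniteProduct"
begin

(* Put a = T^(q^m) and G_n(x) = D_n(x)^(q^m). Raising to the q^m-th power is F_q-linear on O,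
   so each G_n lies in LC(O,K), and G_n(T^k) = C(k,n) a^(k-n). The conditions
   f(T^k) = sum_(n<=k) beta_n G_n(T^k) thus form a unitriangular system, solved by binomial inversion:
   beta_n = sum_k C(n,k) (-a)^(n-k) f(T^k), which is ((Delta - [m]I)^n f)(1) since Delta - [m]I is
   g |-> g(T x) - a g(x). Partial sums of any expansion are eventually constant at T^k, so every
   expansion solves this system; this gives uniqueness. Continuity of f at 0 makes f(T^k) small for
   large k, whence beta_n -> 0. Finally the N-th partial sum S_N agrees with f on polynomials of
   degree < N, so S_N(x) - f(x) = S_N(z) - f(z) where z, the tail of x, is divisible by T^N; both
   terms are then small. *)

unbundle fps_syntax

section \<open>Frobenius on a finite field\<close>

lemma power_card_eq_self:
  fixes x :: "'a::{field,finite}"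
  shows "x ^ CARD('a) = x"
proof (cases "x = 0")
  case False
  define G where "G = \<lparr>carrier = UNIV - {0 :: 'a}, mult = (*), one = 1 :: 'a\<rparr>"
  interpret G: comm_group G
    by (rule comm_groupI) (auto simp: G_def intro!: bexI[of _ "inverse _"])
  have pow: "y [^]\<^bsub>G\<^esub> n = y ^ n" for y n
    by (induction n) (simp_all add: G_def)
  have "x [^]\<^bsub>G\<^esub> card (carrier G) = \<one>\<^bsub>G\<^esub>"
    using False by (intro G.power_order_eq_one) (auto simp: G_def)
  then have "x ^ (CARD('a) - 1) = 1"
    unfolding pow by (simp add: G_def card_Diff_singleton)
  then show ?thesis
    using power_Suc[of x "CARD('a) - 1"] finite_UNIV_card_ge_0[where ?'a = 'a] by simp
qed simp

lemma power_card_power_eq_self: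
  fixes x :: "'a::{field,finite}"
  shows "x ^ (CARD('a) ^ m) = x"
  by (induction m) (simp_all add: power_card_eq_self power_mult)

lemma of_nat_card_choose_eq_0:
  assumes "0 < k" "k < CARD('a::{field,finite})"
  shows "of_nat (CARD('a) choose k) = (0::'a)"
proof -
  define q where "q = CARD('a)"
  have "q > 0"
    by (simp add: q_def)
  \<comment> \<open>\<open>(1 + X)^q - X^q - 1\<close> vanishes on all of \<open>F_q\<close> but has degree less than \<open>q\<close>.\<close>
  define p :: "'a poly" where "p = [:1, 1:] ^ q - Polynomial.monom 1 q - 1"
  have coeff_p: "coeff p i = (if i \<le> q then of_nat (q choose i) else 0)
                   - (if i = q then 1 else 0) - (if i = 0 then 1 else 0)" for i
    by (cases "i \<le> q")
       (auto simp: p_def coeff_linear_poly_power coeff_eq_0 degree_power_eq coeff_monom)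
  have "p = 0"
  proof (rule ccontr)
    assume "p \<noteq> 0"
    have "{x. poly p x = 0} = UNIV"
      using power_card_eq_self[of "1 + _"] power_card_eq_self[of "_ :: 'a"]
      by (auto simp: p_def poly_monom q_def algebra_simps)
    then have "q \<le> degree p"
      using card_poly_roots_bound[OF \<open>p \<noteq> 0\<close>] by (simp add: q_def)
    moreover have "degree p \<le> q - 1"
      by (rule degree_le) (use \<open>q > 0\<close> in \<open>auto simp: coeff_p\<close>)
    ultimately show False
      using \<open>q > 0\<close> by linarith
  qed
  then show ?thesis
    using coeff_p[of k] assms by (simp add: q_def)
qed

lemma fps_power_card_add:
  fixes u v :: "'a::{field,finite} fps"
  shows "(u + v) ^ CARD('a) = u ^ CARD('a) + v ^ CARD('a)"
proof -
  have "(u + v) ^ CARD('a) = (\<Sum>k\<in>{0, CARD('a)}. of_nat (CARD('a) choose k) * u ^ k * v ^ (CARD('a) - k))"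
    unfolding binomial_ring
    by (rule sum.mono_neutral_right)
       (auto simp: of_nat_card_choose_eq_0 simp flip: fps_of_nat)
  then show ?thesis
    by (simp add: add.commute)
qed

lemma fps_power_card_power_add:
  fixes u v :: "'a::{field,finite} fps"
  shows "(u + v) ^ (CARD('a) ^ m) = u ^ (CARD('a) ^ m) + v ^ (CARD('a) ^ m)"
  by (induction m arbitrary: u v) (simp_all add: fps_power_card_add power_mult)

lemma Fq_linear_add: "Fq_linear f \<Longrightarrow> f (x + y) = f x + f y"
  by (simp add: Fq_linear_def)

lemma Fq_linear_fps_const_mult: "Fq_linear f \<Longrightarrow> f (fps_const c * x) = fls_const c * f x"
  by (simp add: Fq_linear_def)

lemma Fq_linear_zero: "Fq_linear f \<Longrightarrow> f 0 = 0"
  using Fq_linear_fps_const_mult[of f 0 0] by simp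

lemma Fq_linear_sum:
  "(\<And>i. i \<in> A \<Longrightarrow> Fq_linear (g i)) \<Longrightarrow> Fq_linear (\<lambda>x. \<Sum>i\<in>A. g i x)"
  by (simp add: Fq_linear_def sum.distrib sum_distrib_left)

lemma Fq_linear_mult_left: "Fq_linear g \<Longrightarrow> Fq_linear (\<lambda>x. c * g x)"
  by (simp add: Fq_linear_def distrib_left mult.left_commute)

lemma Fq_linear_fps_cutoff:
  assumes "Fq_linear f"
  shows "f (fps_cutoff N x) = (\<Sum>k<N. fls_const (x $ k) * f (fps_X ^ k))"
proof (induction N)
  case (Suc N)
  have "fps_cutoff (Suc N) x = fps_cutoff N x + fps_const (x $ N) * fps_X ^ N"
    by (rule fps_ext) (auto simp: less_Suc_eq)
  then show ?case
    using Suc assms by (simp add: Fq_linear_add Fq_linear_fps_const_mult)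
qed (simp add: Fq_linear_zero assms)

section \<open>The T-adic topology\<close>

lemma fps_cutoff_eq_0_iff: "fps_cutoff N x = 0 \<longleftrightarrow> (\<forall>k<N. x $ k = 0)"
  by (auto simp: fps_eq_iff)

lemma fps_cutoff_eq_0_mono: "fps_cutoff N x = 0 \<Longrightarrow> N' \<le> N \<Longrightarrow> fps_cutoff N' x = 0"
  by (simp add: fps_cutoff_eq_0_iff)

lemma fps_cutoff_mult_eq_0:
  "fps_cutoff N (u :: 'a::comm_semiring_0 fps) = 0 \<Longrightarrow> fps_cutoff N (u * v) = 0"
  by (auto simp: fps_cutoff_eq_0_iff fps_mult_nth intro!: sum.neutral)

lemma fps_cutoff_power_eq_0:
  "fps_cutoff N (u :: 'a::comm_semiring_1 fps) = 0 \<Longrightarrow> 0 < e \<Longrightarrow> fps_cutoff N (u ^ e) = 0"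
  by (cases e) (simp_all add: fps_cutoff_mult_eq_0)

definition fls_vanishes_below :: "'a::zero fls \<Rightarrow> int \<Rightarrow> bool" where
  "fls_vanishes_below a M \<longleftrightarrow> (\<forall>k<M. a $$ k = 0)"

lemma fls_vanishes_below_0 [simp]: "fls_vanishes_below 0 M"
  by (simp add: fls_vanishes_below_def)

lemma fls_vanishes_below_mono: "fls_vanishes_below a M \<Longrightarrow> M' \<le> M \<Longrightarrow> fls_vanishes_below a M'"
  by (simp add: fls_vanishes_below_def)

lemma fls_vanishes_below_add:
  "fls_vanishes_below a M \<Longrightarrow> fls_vanishes_below b M \<Longrightarrow> fls_vanishes_below (a + b) M"
  by (simp add: fls_vanishes_below_def)

lemma fls_vanishes_below_diff:
  "fls_vanishes_below a M \<Longrightarrow> fls_vanishes_below b M \<Longrightarrow> fls_vanishes_below (a - b) M"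
  by (simp add: fls_vanishes_below_def)

lemma fls_vanishes_below_uminus: "fls_vanishes_below (- a) M \<longleftrightarrow> fls_vanishes_below a M"
  by (simp add: fls_vanishes_below_def)

lemma fls_vanishes_below_sum:
  "(\<And>i. i \<in> A \<Longrightarrow> fls_vanishes_below (g i) M) \<Longrightarrow> fls_vanishes_below (\<Sum>i\<in>A. g i) M"
  by (induction A rule: infinite_finite_induct) (auto intro: fls_vanishes_below_add)

lemma fls_vanishes_below_iff: "fls_vanishes_below a M \<longleftrightarrow> a = 0 \<or> M \<le> fls_subdegree a"
  unfolding fls_vanishes_below_def
  by (metis fls_eq0_below_subdegree fls_subdegree_geI fls_zero_nth not_le nth_fls_subdegree_nonzero
      order_less_le_trans)

lemma fls_vanishes_below_subdegree: "fls_vanishes_below a (fls_subdegree a)"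
  by (simp add: fls_vanishes_below_iff)

lemma fls_vanishes_below_mult:
  fixes a b :: "'a::{comm_monoid_add,mult_zero} fls"
  assumes "fls_vanishes_below a M1" "fls_vanishes_below b M2"
  shows "fls_vanishes_below (a * b) (M1 + M2)"
proof (cases "a * b = 0")
  case False
  then have "a \<noteq> 0" "b \<noteq> 0"
    by auto
  with False assms show ?thesis
    using fls_mult_subdegree_ge[of a b] by (auto simp: fls_vanishes_below_iff)
qed simp

lemma fls_vanishes_below_power:
  fixes a :: "'a::comm_semiring_1 fls"
  assumes "fls_vanishes_below a M"
  shows "fls_vanishes_below (a ^ j) (int j * M)"
proof (induction j)
  case 0
  show ?case
    by (simp add: fls_vanishes_below_def)
next
  case (Suc j)
  then show ?case
    using fls_vanishes_below_mult[OF assms Suc] by (simp add: algebra_simps)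
qed

lemma fls_vanishes_below_of_nat: "fls_vanishes_below (of_nat n) 0"
  by (simp add: fls_vanishes_below_def fls_of_nat_nth)

lemma fls_vanishes_below_fls_X_power: "fls_vanishes_below (fls_X ^ n) (int n)"
  by (simp add: fls_vanishes_below_def)

lemma fls_vanishes_below_fps_to_fls:
  "fps_cutoff N x = 0 \<Longrightarrow> fls_vanishes_below (fps_to_fls x) (int N)"
  by (auto simp: fls_vanishes_below_def fps_cutoff_eq_0_iff)

lemma fls_vanishes_below_uniform: "\<exists>M. \<forall>k<(K::nat). fls_vanishes_below (g k) M"
proof (intro exI allI impI)
  fix k
  assume "k < K"
  then have "Min (insert 0 ((\<lambda>k. fls_subdegree (g k)) ` {..<K})) \<le> fls_subdegree (g k)"
    by (auto intro!: Min_le)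
  then show "fls_vanishes_below (g k) (Min (insert 0 ((\<lambda>k. fls_subdegree (g k)) ` {..<K})))"
    by (rule fls_vanishes_below_mono[OF fls_vanishes_below_subdegree])
qed

lemma dist_fls_less_inverse_power_iff:
  fixes a b :: "'a::group_add fls"
  shows "dist a b < inverse (2 ^ n) \<longleftrightarrow> fls_vanishes_below (a - b) (int n + 1)"
proof (cases "a = b")
  case False
  define d where "d = fls_subdegree (a - b)"
  have "inverse ((2::real) ^ n) \<le> 2 ^ k" for k
    by (rule order_trans[OF _ one_le_power]) (simp_all add: inverse_le_1_iff)
  moreover have "inverse ((2::real) ^ nat d) < inverse (2 ^ n) \<longleftrightarrow> n < nat d"
    by simp
  ultimately show ?thesis
    using False by (auto simp: dist_fls_def fls_vanishes_below_iff simp flip: d_def not_le)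
qed simp

lemma tendsto_fls_iff:
  fixes f :: "'b \<Rightarrow> 'a::group_add fls"
  shows "(f \<longlongrightarrow> L) F \<longleftrightarrow> (\<forall>M. eventually (\<lambda>x. fls_vanishes_below (f x - L) M) F)"
proof
  assume lim: "(f \<longlongrightarrow> L) F"
  show "\<forall>M. eventually (\<lambda>x. fls_vanishes_below (f x - L) M) F"
  proof
    fix M :: int
    have "eventually (\<lambda>x. dist (f x) L < inverse (2 ^ nat M)) F"
      using lim by (rule tendstoD) simp
    then show "eventually (\<lambda>x. fls_vanishes_below (f x - L) M) F"
      by eventually_elim
         (auto simp: dist_fls_less_inverse_power_iff elim: fls_vanishes_below_mono)
  qed
next
  assume small: "\<forall>M. eventually (\<lambda>x. fls_vanishes_below (f x - L) M) F"
  show "(f \<longlongrightarrow> L) F"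
  proof (rule tendstoI)
    fix e :: real
    assume "e > 0"
    then obtain n where n: "(1 / 2) ^ n < e"
      using real_arch_pow_inv[of e "1 / 2"] by auto
    from small have "eventually (\<lambda>x. fls_vanishes_below (f x - L) (int n + 1)) F"
      by blast
    then show "eventually (\<lambda>x. dist (f x) L < e) F"
      by eventually_elim
         (use n in \<open>auto simp: power_one_over inverse_eq_divide
                           simp flip: dist_fls_less_inverse_power_iff\<close>)
  qed
qed

lemma open_fls_vanishes_below: "open {a :: 'a::group_add fls. fls_vanishes_below a M}"
  unfolding open_fls_def
proof
  fix a :: "'a fls"
  assume "a \<in> {a. fls_vanishes_below a M}"
  then have a: "fls_vanishes_below a M"
    by simp
  have "fls_vanishes_below y M" if "dist y a < inverse (2 ^ nat M)" for y
  proof -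
    have "fls_vanishes_below (y - a) M"
      using that by (auto simp: dist_fls_less_inverse_power_iff elim: fls_vanishes_below_mono)
    then show ?thesis
      using fls_vanishes_below_add[OF _ a] by fastforce
  qed
  then show "\<exists>r>0. {y. dist y a < r} \<subseteq> {a. fls_vanishes_below a M}"
    by (intro exI[of _ "inverse (2 ^ nat M)"]) auto
qed

lemma continuous_fls_vanishes_below:
  fixes f :: "'a::group_add fps \<Rightarrow> 'b::group_add fls"
  assumes "continuous_on UNIV f" "f 0 = 0"
  obtains N where "\<And>x. fps_cutoff N x = 0 \<Longrightarrow> fls_vanishes_below (f x) M"
proof -
  have "open (f -` {a. fls_vanishes_below a M})"
    using continuous_imp_open_vimage[OF assms(1) open_UNIV open_fls_vanishes_below] by simp
  moreover have "0 \<in> f -` {a. fls_vanishes_below a M}"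
    using assms(2) by simp
  ultimately obtain N where "{x. fps_cutoff N x = fps_cutoff N 0} \<subseteq> f -` {a. fls_vanishes_below a M}"
    unfolding open_fps_iff by blast
  then show thesis
    using that by auto
qed

section \<open>Hasse derivatives\<close>

lemma hasse_add: "hasse n (x + y) = hasse n x + hasse n y"
  by (rule fps_ext) (simp add: hasse_def algebra_simps)

lemma hasse_fps_const_mult: "hasse n (fps_const c * x) = fps_const c * hasse n x"
  by (rule fps_ext) (simp add: hasse_def algebra_simps)

lemma hasse_fps_X_power:
  "hasse n (fps_X ^ k :: 'a::field fps) = (if n \<le> k then of_nat (k choose n) * fps_X ^ (k - n) else 0)"
  by (rule fps_ext) (auto simp: hasse_def simp flip: fps_of_nat)

lemma hasse_fps_cutoff_eq_0: "fps_cutoff N x = 0 \<Longrightarrow> fps_cutoff (N - n) (hasse n x) = 0"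
  by (auto simp: fps_cutoff_eq_0_iff hasse_def)

definition hasse_frobenius :: "nat \<Rightarrow> nat \<Rightarrow> 'a::{field,finite} fps \<Rightarrow> 'a fls" where
  "hasse_frobenius m n x = fps_to_fls (hasse n x ^ (CARD('a) ^ m))"

lemma Fq_linear_hasse_frobenius: "Fq_linear (hasse_frobenius m n)"
  by (simp add: Fq_linear_def hasse_frobenius_def hasse_add hasse_fps_const_mult
      fps_power_card_power_add power_mult_distrib power_card_power_eq_self fls_times_fps_to_fls)

lemma hasse_frobenius_fps_X_power:
  "hasse_frobenius m n (fps_X ^ k :: 'a::{field,finite} fps) =
     (if n \<le> k then of_nat (k choose n) * (fls_X ^ (CARD('a) ^ m)) ^ (k - n) else 0)"
proof (cases "n \<le> k")
  case True
  have "(of_nat (k choose n) * fps_X ^ (k - n) :: 'a fps) ^ (CARD('a) ^ m)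
      = fps_const (of_nat (k choose n) ^ (CARD('a) ^ m)) * fps_X ^ ((k - n) * CARD('a) ^ m)"
    by (simp add: power_mult_distrib power_mult flip: fps_of_nat)
  also have "\<dots> = of_nat (k choose n) * fps_X ^ (CARD('a) ^ m * (k - n))"
    by (simp add: power_card_power_eq_self fps_of_nat mult.commute)
  finally show ?thesis
    using True by (simp add: hasse_frobenius_def hasse_fps_X_power fls_times_fps_to_fls
        fps_to_fls_power power_mult)
qed (simp add: hasse_frobenius_def hasse_fps_X_power)

lemma hasse_frobenius_vanishes_below:
  "fps_cutoff N x = 0 \<Longrightarrow> fls_vanishes_below (hasse_frobenius m n x) (int (N - n))"
  unfolding hasse_frobenius_def
  by (intro fls_vanishes_below_fps_to_fls fps_cutoff_power_eq_0 hasse_fps_cutoff_eq_0) simp_all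

section \<open>Binomial identities\<close>

lemma sum_atMost_triangle_swap:
  "(\<Sum>n\<le>k. \<Sum>j\<le>n. h n j) = (\<Sum>j\<le>(k::nat). \<Sum>n\<in>{j..k}. h n j)"
proof -
  have "(\<Sum>n\<le>k. \<Sum>j\<le>n. h n j) = (\<Sum>n\<le>k. \<Sum>j\<in>{j. j \<in> {..k} \<and> j \<le> n}. h n j)"
    by (rule sum.cong[OF refl], rule sum.cong) auto
  also have "\<dots> = (\<Sum>j\<le>k. \<Sum>n\<in>{n. n \<in> {..k} \<and> j \<le> n}. h n j)"
    by (rule sum.swap_restrict) auto
  also have "\<dots> = (\<Sum>j\<le>k. \<Sum>n\<in>{j..k}. h n j)"
    by (rule sum.cong[OF refl], rule sum.cong) auto
  finally show ?thesis .
qed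

lemma sum_choose_mult_power:
  fixes x b :: "'r::comm_ring_1"
  assumes "i \<le> n"
  shows "(\<Sum>j\<in>{i..n}. of_nat (n choose j) * of_nat (j choose i) * b ^ (n - j) * x ^ (j - i))
       = of_nat (n choose i) * (x + b) ^ (n - i)"
proof -
  have "(\<Sum>j\<in>{i..n}. of_nat (n choose j) * of_nat (j choose i) * b ^ (n - j) * x ^ (j - i))
      = (\<Sum>l\<le>n - i. of_nat (n choose i) * (of_nat ((n - i) choose l) * x ^ l * b ^ (n - i - l)))"
    unfolding sum.atLeastAtMost_shift_0[OF assms] atLeast0AtMost
  proof (rule sum.cong[OF refl])
    fix l
    assume "l \<in> {..n - i}"
    then have "(n choose (i + l)) * ((i + l) choose i) = (n choose i) * ((n - i) choose l)"
      using choose_mult[of i "i + l" n] assms by simp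
    then have c: "of_nat (n choose (i + l)) * of_nat ((i + l) choose i)
                = (of_nat (n choose i) * of_nat ((n - i) choose l) :: 'r)"
      by (metis of_nat_mult)
    have "((\<lambda>j. of_nat (n choose j) * of_nat (j choose i) * b ^ (n - j) * x ^ (j - i)) \<circ> plus i) l
        = of_nat (n choose (i + l)) * of_nat ((i + l) choose i) * b ^ (n - i - l) * x ^ l"
      by simp
    also have "\<dots> = of_nat (n choose i) * of_nat ((n - i) choose l) * b ^ (n - i - l) * x ^ l"
      by (simp only: c)
    finally show "((\<lambda>j. of_nat (n choose j) * of_nat (j choose i) * b ^ (n - j) * x ^ (j - i)) \<circ> plus i) l
             = of_nat (n choose i) * (of_nat ((n - i) choose l) * x ^ l * b ^ (n - i - l))"
      by (simp add: mult_ac)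
  qed
  also have "\<dots> = of_nat (n choose i) * (x + b) ^ (n - i)"
    by (simp add: binomial_ring sum_distrib_left)
  finally show ?thesis .
qed

lemma binomial_inversion:
  fixes a :: "'r::comm_ring_1"
  shows "(\<Sum>n\<le>k. of_nat (k choose n) * a ^ (k - n) * (\<Sum>j\<le>n. of_nat (n choose j) * (-a) ^ (n - j) * F j))
       = F k"
proof -
  have "(\<Sum>n\<le>k. of_nat (k choose n) * a ^ (k - n) * (\<Sum>j\<le>n. of_nat (n choose j) * (-a) ^ (n - j) * F j))
      = (\<Sum>j\<le>k. (\<Sum>n\<in>{j..k}. of_nat (k choose n) * of_nat (n choose j)
                                  * a ^ (k - n) * (-a) ^ (n - j)) * F j)"
    by (simp add: sum_distrib_left sum_distrib_right sum_atMost_triangle_swap mult_ac)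
  also have "\<dots> = (\<Sum>j\<le>k. of_nat (k choose j) * (-a + a) ^ (k - j) * F j)"
    by (intro sum.cong refl) (simp add: sum_choose_mult_power)
  also have "\<dots> = (\<Sum>j\<le>k. if j = k then F k else 0)"
    by (intro sum.cong refl) (auto simp: power_0_left)
  finally show ?thesis
    by simp
qed

lemma sum_choose_power_Suc:
  fixes c :: "'r::comm_ring_1"
  shows "(\<Sum>k\<le>Suc n. of_nat (Suc n choose k) * c ^ (Suc n - k) * F k)
       = (\<Sum>k\<le>n. of_nat (n choose k) * c ^ (n - k) * F (Suc k))
         + c * (\<Sum>k\<le>n. of_nat (n choose k) * c ^ (n - k) * F k)"
proof -
  have "c * (\<Sum>k\<le>n. of_nat (n choose k) * c ^ (n - k) * F k)
      = (\<Sum>k\<le>Suc n. of_nat (n choose k) * c ^ (Suc n - k) * F k)"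
    by (simp add: sum_distrib_left Suc_diff_le binomial_eq_0 mult_ac)
  also have "\<dots> = c ^ Suc n * F 0 + (\<Sum>k\<le>n. of_nat (n choose Suc k) * c ^ (n - k) * F (Suc k))"
    by (simp only: sum.atMost_Suc_shift) simp
  finally show ?thesis
    by (simp add: sum.atMost_Suc_shift[of _ n] sum.distrib algebra_simps del: sum.atMost_Suc)
qed

section \<open>The expansion\<close>

lemma Delta_minus_power:
  fixes g :: "'a::{field,finite} fps \<Rightarrow> 'a fls"
  shows "((Delta_minus m ^^ n) g) x =
    (\<Sum>k\<le>n. of_nat (n choose k) * (- (fls_X ^ (CARD('a) ^ m))) ^ (n - k) * g (fps_X ^ k * x))"
proof (induction n arbitrary: x)
  case (Suc n)
  define c :: "'a fls" where "c = - (fls_X ^ (CARD('a) ^ m))"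
  have "((Delta_minus m ^^ Suc n) g) x
      = ((Delta_minus m ^^ n) g) (fps_X * x) + c * ((Delta_minus m ^^ n) g) x"
    by (simp add: Delta_minus_def Carlitz_Delta_def bracket_def c_def algebra_simps)
  also have "\<dots> = (\<Sum>k\<le>n. of_nat (n choose k) * c ^ (n - k) * g (fps_X ^ Suc k * x))
                  + c * (\<Sum>k\<le>n. of_nat (n choose k) * c ^ (n - k) * g (fps_X ^ k * x))"
    using Suc.IH[of "fps_X * x"] Suc.IH[of x] by (simp add: c_def mult_ac)
  also have "\<dots> = (\<Sum>k\<le>Suc n. of_nat (Suc n choose k) * c ^ (Suc n - k) * g (fps_X ^ k * x))"
    by (rule sum_choose_power_Suc[symmetric])
  finally show ?case
    by (simp add: c_def)
qed simp

definition expansion_coeff :: "nat \<Rightarrow> ('a::{field,finite} fps \<Rightarrow> 'a fls) \<Rightarrow> nat \<Rightarrow> 'a fls" where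
  "expansion_coeff m f n = ((Delta_minus m ^^ n) f) 1"

lemma expansion_coeff_eq:
  fixes f :: "'a::{field,finite} fps \<Rightarrow> 'a fls"
  shows "expansion_coeff m f n =
     (\<Sum>k\<le>n. of_nat (n choose k) * (- (fls_X ^ (CARD('a) ^ m))) ^ (n - k) * f (fps_X ^ k))"
  by (simp add: expansion_coeff_def Delta_minus_power)

lemma expansion_coeff_eq_double_sum:
  fixes f :: "'a::{field,finite} fps \<Rightarrow> 'a fls"
  shows "expansion_coeff m f n =
    (\<Sum>i\<le>n. \<Sum>j\<in>{i..n}. (-1) ^ (n - i) * of_nat (n choose j) * bracket m ^ (n - j)
              * f (fps_X ^ i) * fps_to_fls (hasse i (fps_X ^ j)))"
proof -
  have "(\<Sum>j\<in>{i..n}. (-1) ^ (n - i) * of_nat (n choose j) * bracket m ^ (n - j)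
                * f (fps_X ^ i) * fps_to_fls (hasse i (fps_X ^ j)))
      = of_nat (n choose i) * (- (fls_X ^ (CARD('a) ^ m))) ^ (n - i) * f (fps_X ^ i)"
    if "i \<le> n" for i
  proof -
    have "(\<Sum>j\<in>{i..n}. (-1) ^ (n - i) * of_nat (n choose j) * bracket m ^ (n - j)
                * f (fps_X ^ i) * fps_to_fls (hasse i (fps_X ^ j)))
        = (-1) ^ (n - i) * f (fps_X ^ i) * (\<Sum>j\<in>{i..n}. of_nat (n choose j) * of_nat (j choose i)
                * bracket m ^ (n - j) * fls_X ^ (j - i))"
      by (simp add: sum_distrib_left hasse_fps_X_power fls_times_fps_to_fls fps_to_fls_power mult_ac)
    also have "\<dots> = (-1) ^ (n - i) * f (fps_X ^ i)
                      * (of_nat (n choose i) * (fls_X ^ (CARD('a) ^ m)) ^ (n - i))"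
      using that by (simp add: sum_choose_mult_power bracket_def)
    also have "\<dots> = of_nat (n choose i) * (- (fls_X ^ (CARD('a) ^ m))) ^ (n - i) * f (fps_X ^ i)"
      by (simp add: power_minus[of "fls_X ^ _"] mult_ac)
    finally show ?thesis .
  qed
  then show ?thesis
    unfolding expansion_coeff_eq by (intro sum.cong refl) simp
qed

lemma expansion_coeff_fps_X_power:
  fixes f :: "'a::{field,finite} fps \<Rightarrow> 'a fls"
  shows "(\<Sum>n\<le>k. expansion_coeff m f n * hasse_frobenius m n (fps_X ^ k)) = f (fps_X ^ k)"
proof -
  have "(\<Sum>n\<le>k. expansion_coeff m f n * hasse_frobenius m n (fps_X ^ k))
      = (\<Sum>n\<le>k. of_nat (k choose n) * (fls_X ^ (CARD('a) ^ m)) ^ (k - n) * expansion_coeff m f n)"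
    by (intro sum.cong refl) (simp add: hasse_frobenius_fps_X_power mult_ac)
  then show ?thesis
    by (simp add: expansion_coeff_eq binomial_inversion)
qed

lemma partial_sum_fps_X_power:
  fixes \<beta> :: "nat \<Rightarrow> 'a::{field,finite} fls"
  assumes "k < N"
  shows "(\<Sum>n<N. \<beta> n * hasse_frobenius m n (fps_X ^ k)) = (\<Sum>n\<le>k. \<beta> n * hasse_frobenius m n (fps_X ^ k))"
  by (rule sum.mono_neutral_right) (use assms in \<open>auto simp: hasse_frobenius_fps_X_power\<close>)

lemma expansion_coeff_unique:
  fixes f :: "'a::{field,finite} fps \<Rightarrow> 'a fls"
  assumes "\<And>k. (\<lambda>N. \<Sum>n<N. \<beta> n * hasse_frobenius m n (fps_X ^ k)) \<longlonglongrightarrow> f (fps_X ^ k)"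
  shows "\<beta> = expansion_coeff m f"
proof -
  have triangular: "(\<Sum>n\<le>k. \<beta> n * hasse_frobenius m n (fps_X ^ k)) = f (fps_X ^ k)" for k
  proof -
    have "eventually (\<lambda>N. (\<Sum>n<N. \<beta> n * hasse_frobenius m n (fps_X ^ k))
                         = (\<Sum>n\<le>k. \<beta> n * hasse_frobenius m n (fps_X ^ k))) sequentially"
      by (intro eventually_sequentiallyI[of "Suc k"] partial_sum_fps_X_power) simp
    then have "(\<lambda>N. \<Sum>n<N. \<beta> n * hasse_frobenius m n (fps_X ^ k))
                 \<longlonglongrightarrow> (\<Sum>n\<le>k. \<beta> n * hasse_frobenius m n (fps_X ^ k))"
      by (rule tendsto_eventually)
    with assms show ?thesis
      using LIMSEQ_unique by blast
  qed
  have "\<beta> k = expansion_coeff m f k" for k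
  proof (induction k rule: less_induct)
    case (less k)
    have diagonal: "hasse_frobenius m k (fps_X ^ k :: 'a fps) = 1"
      by (simp add: hasse_frobenius_fps_X_power)
    have "(\<Sum>n<k. \<beta> n * hasse_frobenius m n (fps_X ^ k)) + \<beta> k
        = (\<Sum>n<k. expansion_coeff m f n * hasse_frobenius m n (fps_X ^ k)) + expansion_coeff m f k"
      using triangular[of k] expansion_coeff_fps_X_power[of m f k]
      by (simp add: diagonal flip: lessThan_Suc_atMost)
    then show ?case
      using less by simp
  qed
  then show ?thesis
    by blast
qed

lemma expansion_coeff_vanishes_below:
  fixes f :: "'a::{field,finite} fps \<Rightarrow> 'a fls"
  assumes tail: "\<And>k. N \<le> k \<Longrightarrow> fls_vanishes_below (f (fps_X ^ k)) M"
    and head: "\<And>k. k < N \<Longrightarrow> fls_vanishes_below (f (fps_X ^ k)) B"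
    and n: "N + nat (M - B) \<le> n"
  shows "fls_vanishes_below (expansion_coeff m f n) M"
  unfolding expansion_coeff_eq
proof (intro fls_vanishes_below_sum)
  fix k
  assume k: "k \<in> {..n}"
  have "fls_vanishes_below (- (fls_X ^ (CARD('a) ^ m)) :: 'a fls) 1"
    unfolding fls_vanishes_below_uminus
    by (rule fls_vanishes_below_mono[OF fls_vanishes_below_fls_X_power]) simp
  then have power: "fls_vanishes_below ((- (fls_X ^ (CARD('a) ^ m)) :: 'a fls) ^ (n - k)) (int (n - k))"
    using fls_vanishes_below_power by fastforce
  show "fls_vanishes_below
          (of_nat (n choose k) * (- (fls_X ^ (CARD('a) ^ m))) ^ (n - k) * f (fps_X ^ k)) M"
  proof (cases "k < N")
    case True
    then have "fls_vanishes_below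
                 (of_nat (n choose k) * (- (fls_X ^ (CARD('a) ^ m))) ^ (n - k) * f (fps_X ^ k))
                 (0 + int (n - k) + B)"
      using head power by (intro fls_vanishes_below_mult fls_vanishes_below_of_nat)
    moreover have "M \<le> 0 + int (n - k) + B"
      using n k True by (simp add: of_nat_diff)
    ultimately show ?thesis
      by (rule fls_vanishes_below_mono)
  next
    case False
    then have "fls_vanishes_below
                 (of_nat (n choose k) * (- (fls_X ^ (CARD('a) ^ m))) ^ (n - k) * f (fps_X ^ k))
                 (0 + 0 + M)"
      using tail fls_vanishes_below_mono[OF power, of 0]
      by (intro fls_vanishes_below_mult fls_vanishes_below_of_nat) simp_all
    then show ?thesis
      by simp
  qed
qed

lemma expansion_coeff_tendsto_0:
  fixes f :: "'a::{field,finite} fps \<Rightarrow> 'a fls"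
  assumes "f \<in> LC"
  shows "expansion_coeff m f \<longlonglongrightarrow> 0"
  unfolding tendsto_fls_iff
proof
  fix M :: int
  have cont: "continuous_on UNIV f" and f0: "f 0 = 0"
    using assms Fq_linear_zero[of f] by (simp_all add: LC_def)
  obtain N where N: "\<And>x. fps_cutoff N x = 0 \<Longrightarrow> fls_vanishes_below (f x) M"
    by (rule continuous_fls_vanishes_below[OF cont f0, where M = M]) blast
  obtain B where B: "\<forall>k<N. fls_vanishes_below (f (fps_X ^ k)) B"
    using fls_vanishes_below_uniform[where g = "\<lambda>k. f (fps_X ^ k)"] by blast
  have "fls_vanishes_below (expansion_coeff m f n) M" if "N + nat (M - B) \<le> n" for n
    using that B by (intro expansion_coeff_vanishes_below N) (simp_all add: fps_cutoff_eq_0_iff)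
  then show "eventually (\<lambda>n. fls_vanishes_below (expansion_coeff m f n - 0) M) sequentially"
    by (intro eventually_sequentiallyI[of "N + nat (M - B)"]) simp
qed

lemma partial_sum_vanishes_below:
  assumes z: "fps_cutoff N z = 0"
    and tail: "\<And>n. N2 \<le> n \<Longrightarrow> fls_vanishes_below (\<beta> n) M"
    and head: "\<And>n. n < N2 \<Longrightarrow> fls_vanishes_below (\<beta> n) B"
    and N: "N2 + nat (M - B) \<le> N"
  shows "fls_vanishes_below (\<Sum>n<N. \<beta> n * hasse_frobenius m n z) M"
proof (intro fls_vanishes_below_sum)
  fix n
  assume n: "n \<in> {..<N}"
  show "fls_vanishes_below (\<beta> n * hasse_frobenius m n z) M"
  proof (cases "n < N2")
    case True
    have "fls_vanishes_below (\<beta> n * hasse_frobenius m n z) (B + int (N - n))"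
      using head True hasse_frobenius_vanishes_below[OF z] by (intro fls_vanishes_below_mult)
    moreover have "M \<le> B + int (N - n)"
      using N n True by (simp add: of_nat_diff)
    ultimately show ?thesis
      by (rule fls_vanishes_below_mono)
  next
    case False
    have "fls_vanishes_below (\<beta> n * hasse_frobenius m n z) (M + int (0 - n))"
      using tail False hasse_frobenius_vanishes_below[of 0 z]
      by (intro fls_vanishes_below_mult) simp_all
    then show ?thesis
      by simp
  qed
qed

lemma partial_sum_minus_eq_tail:
  fixes f :: "'a::{field,finite} fps \<Rightarrow> 'a fls" and N m :: nat
  assumes lin: "Fq_linear f"
  defines "S \<equiv> \<lambda>y. \<Sum>n<N. expansion_coeff m f n * hasse_frobenius m n y"
  shows "S x - f x = S (x - fps_cutoff N x) - f (x - fps_cutoff N x)"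
proof -
  have lin_S: "Fq_linear S"
    unfolding S_def by (intro Fq_linear_sum Fq_linear_mult_left Fq_linear_hasse_frobenius)
  have "S (fps_cutoff N x) = f (fps_cutoff N x)"
    unfolding Fq_linear_fps_cutoff[OF lin_S] Fq_linear_fps_cutoff[OF lin]
    by (intro sum.cong refl) (simp add: S_def partial_sum_fps_X_power expansion_coeff_fps_X_power)
  then show ?thesis
    using Fq_linear_add[OF lin_S, of "fps_cutoff N x" "x - fps_cutoff N x"]
      Fq_linear_add[OF lin, of "fps_cutoff N x" "x - fps_cutoff N x"]
    by simp
qed

lemma expansion_tendsto:
  fixes f :: "'a::{field,finite} fps \<Rightarrow> 'a fls"
  assumes "f \<in> LC"
  shows "(\<lambda>N. \<Sum>n<N. expansion_coeff m f n * hasse_frobenius m n x) \<longlonglongrightarrow> f x"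
  unfolding tendsto_fls_iff
proof
  fix M :: int
  have lin: "Fq_linear f" and cont: "continuous_on UNIV f"
    using assms by (simp_all add: LC_def)
  obtain N1 where N1: "\<And>z. fps_cutoff N1 z = 0 \<Longrightarrow> fls_vanishes_below (f z) M"
    by (rule continuous_fls_vanishes_below[OF cont Fq_linear_zero[OF lin], where M = M]) blast
  have "eventually (\<lambda>n. fls_vanishes_below (expansion_coeff m f n - 0) M) sequentially"
    using expansion_coeff_tendsto_0[OF assms, of m] unfolding tendsto_fls_iff by blast
  then obtain N2 where N2: "\<And>n. N2 \<le> n \<Longrightarrow> fls_vanishes_below (expansion_coeff m f n) M"
    unfolding eventually_sequentially by auto
  obtain B where B: "\<forall>n<N2. fls_vanishes_below (expansion_coeff m f n) B"
    using fls_vanishes_below_uniform[where g = "expansion_coeff m f"] by blast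
  have "fls_vanishes_below
          ((\<Sum>n<N. expansion_coeff m f n * hasse_frobenius m n x) - f x) M"
    if N: "N1 + N2 + nat (M - B) \<le> N" for N
  proof -
    have z: "fps_cutoff N (x - fps_cutoff N x) = 0"
      by (simp add: fps_cutoff_eq_0_iff)
    have "fls_vanishes_below (f (x - fps_cutoff N x)) M"
      using N by (intro N1 fps_cutoff_eq_0_mono[OF z]) simp
    moreover have "fls_vanishes_below
                     (\<Sum>n<N. expansion_coeff m f n * hasse_frobenius m n (x - fps_cutoff N x)) M"
      using partial_sum_vanishes_below[OF z N2, where B = B] B N by simp
    ultimately show ?thesis
      unfolding partial_sum_minus_eq_tail[OF lin, where N = N and m = m and x = x]
      by (rule fls_vanishes_below_diff[rotated])
  qed
  then show "eventually (\<lambda>N. fls_vanishes_below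
               ((\<Sum>n<N. expansion_coeff m f n * hasse_frobenius m n x) - f x) M) sequentially"
    by (intro eventually_sequentiallyI[of "N1 + N2 + nat (M - B)"])
qed

theorem theorem12:
  fixes f :: "'a::{field,finite} fps \<Rightarrow> 'a fls" and m :: nat
  assumes "f \<in> LC"
  defines "P \<equiv> (\<lambda>\<beta>::nat \<Rightarrow> 'a fls. \<beta> \<longlonglongrightarrow> 0 \<and>
      (\<forall>x. (\<lambda>N. \<Sum>n<N. \<beta> n * fps_to_fls (hasse n x ^ (CARD('a) ^ m))) \<longlonglongrightarrow> f x))"
  shows "(\<exists>!\<beta>. P \<beta>) \<and>
    (\<forall>\<beta>. P \<beta> \<longrightarrow> (\<forall>n.
       \<beta> n = ((Delta_minus m ^^ n) f) 1 \<and>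
       \<beta> n = (\<Sum>i\<le>n. \<Sum>j\<in>{i..n}. (-1) ^ (n - i) * of_nat (n choose j) * bracket m ^ (n - j)
                 * f (fps_X ^ i) * fps_to_fls (hasse i (fps_X ^ j)))))"
proof -
  have P_iff: "P \<beta> \<longleftrightarrow> \<beta> \<longlonglongrightarrow> 0 \<and> (\<forall>x. (\<lambda>N. \<Sum>n<N. \<beta> n * hasse_frobenius m n x) \<longlonglongrightarrow> f x)"
    for \<beta>
    by (simp add: P_def hasse_frobenius_def)
  have exists: "P (expansion_coeff m f)"
    using assms(1) by (simp add: P_iff expansion_coeff_tendsto_0 expansion_tendsto)
  have unique: "\<beta> = expansion_coeff m f" if "P \<beta>" for \<beta>
    using that by (intro expansion_coeff_unique) (simp add: P_iff)
  have "\<exists>!\<beta>. P \<beta>"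
    using exists unique by blast
  moreover have "\<beta> n = ((Delta_minus m ^^ n) f) 1 \<and>
       \<beta> n = (\<Sum>i\<le>n. \<Sum>j\<in>{i..n}. (-1) ^ (n - i) * of_nat (n choose j) * bracket m ^ (n - j)
                 * f (fps_X ^ i) * fps_to_fls (hasse i (fps_X ^ j)))" if "P \<beta>" for \<beta> n
    using unique[OF that] expansion_coeff_eq_double_sum[of m f n] by (simp add: expansion_coeff_def)
  ultimately show ?thesis
    by blast
qed

end
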